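(* Let $\epsilon$ be a real number with $0 < \epsilon \leq 1$ and let $t$ be an integer such that every finite simple graph $G$ with $\Delta_\epsilon(G) \geq t$ satisfies $\chi(G) \leq \max\{\omega(G), \Delta_\epsilon(G)\}$. Then $t \geq 1 + \frac{2}{\epsilon}$.
   Context: For a graph $G$, $d(v)$ is the degree of $v$, $\chi(G)$ the chromatic number and $\omega(G)$ the clique number. For $0 \leq \epsilon \leq 1$, \[\Delta_\epsilon(G) = \left\lfloor \max_{xy \in E(G)} \Big( (1-\epsilon)\min\{d(x), d(y)\} + \epsilon \max\{d(x), d(y)\} \Big) \right\rfloor.\] *)

theory Defs
  imports Complex_Main
begin

definition simple_graph :: "'a set \<Rightarrow> 'a set set \<Rightarrow> bool" where
  "simple_graph V E \<longleftrightarrow> finite V \<and> (\<forall>e\<in>E. \<exists>x y. x \<in> V \<and> y \<in> V \<and> x \<noteq> y \<and> e = {x, y})"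

definition degree :: "'a set set \<Rightarrow> 'a \<Rightarrow> nat" where
  "degree E v = card {u. {u, v} \<in> E}"

definition proper_colouring :: "'a set \<Rightarrow> 'a set set \<Rightarrow> nat \<Rightarrow> ('a \<Rightarrow> nat) \<Rightarrow> bool" where
  "proper_colouring V E k c \<longleftrightarrow> c ` V \<subseteq> {..<k} \<and> (\<forall>x y. {x, y} \<in> E \<longrightarrow> c x \<noteq> c y)"

definition chromatic_number :: "'a set \<Rightarrow> 'a set set \<Rightarrow> nat" where
  "chromatic_number V E = (LEAST k. \<exists>c. proper_colouring V E k c)"

definition is_clique :: "'a set \<Rightarrow> 'a set set \<Rightarrow> 'a set \<Rightarrow> bool" where
  "is_clique V E K \<longleftrightarrow> K \<subseteq> V \<and> (\<forall>x\<in>K. \<forall>y\<in>K. x \<noteq> y \<longrightarrow> {x, y} \<in> E)"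

definition clique_number :: "'a set \<Rightarrow> 'a set set \<Rightarrow> nat" where
  "clique_number V E = Max {card K | K. is_clique V E K}"

text \<open>Delta_eps; by convention 0 for an edgeless graph (maximum over the empty set).\<close>
definition Delta_eps :: "real \<Rightarrow> 'a set \<Rightarrow> 'a set set \<Rightarrow> int" where
  "Delta_eps \<epsilon> V E = (if E = {} then 0 else
     \<lfloor>Max ((\<lambda>e. (1 - \<epsilon>) * real (Min (degree E ` e)) + \<epsilon> * real (Max (degree E ` e))) ` E)\<rfloor>)"

end

theory Submission imports Defs begin

text \<open>For k \<ge> 2 take a k-clique on {..<k}, a (k-1)-clique on {k+2..2k}, and two non-adjacent
  hubs k and k+1, each joined to the whole second clique, with hub k joined to the lower half
  and hub k+1 to the upper half of the first clique. Every clique has at most k vertices, but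
  there is no k-colouring: both hubs must receive the one colour missing on the second clique,
  and some vertex of the first clique carries that colour and is adjacent to one of them.
  Every edge has an endpoint of degree at most k, the hubs have degree at most k + (k-1) div 2,
  and the edges of the first clique have both degrees equal to k, so the graph has
  Delta_eps = k as soon as eps (k-1) < 2. If t < 1 + 2/eps, the choice k = max t 2 therefore
  violates the hypothesis.\<close>

definition edges_of :: "('a \<Rightarrow> 'a \<Rightarrow> bool) \<Rightarrow> 'a set set" where
  "edges_of R = {{x, y} | x y. R x y}"

lemma doubleton_in_edges_of: "symp R \<Longrightarrow> {u, v} \<in> edges_of R \<longleftrightarrow> R u v"
  unfolding edges_of_def by (auto simp: doubleton_eq_iff dest: sympD)

lemma degree_edges_of: "symp R \<Longrightarrow> degree (edges_of R) v = card {u. R u v}"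
  unfolding degree_def by (simp add: doubleton_in_edges_of)

lemma simple_graph_edges_of:
  assumes "finite V" and "\<And>x y. R x y \<Longrightarrow> x \<in> V \<and> y \<in> V \<and> x \<noteq> y"
  shows "simple_graph V (edges_of R)"
  using assms unfolding simple_graph_def edges_of_def by blast

lemma simple_graph_finite_edges:
  assumes "simple_graph V E" shows "finite E"
proof (rule finite_subset)
  show "E \<subseteq> Pow V" using assms unfolding simple_graph_def by auto
  show "finite (Pow V)" using assms unfolding simple_graph_def by simp
qed

lemma proper_colouring_mono:
  "proper_colouring V E k c \<Longrightarrow> k \<le> k' \<Longrightarrow> proper_colouring V E k' c"
  unfolding proper_colouring_def by auto

lemma less_chromatic_numberI:
  assumes "proper_colouring V E m c\<^sub>0" and "\<And>c. \<not> proper_colouring V E k c"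
  shows "k < chromatic_number V E"
proof (rule ccontr)
  assume "\<not> k < chromatic_number V E"
  moreover obtain c where "proper_colouring V E (chromatic_number V E) c"
    using LeastI[of "\<lambda>k. \<exists>c. proper_colouring V E k c"] assms(1)
    unfolding chromatic_number_def by blast
  ultimately show False using assms(2) proper_colouring_mono by (meson not_less)
qed

lemma proper_colouring_inj_on_clique:
  "proper_colouring V E k c \<Longrightarrow> is_clique V E K \<Longrightarrow> inj_on c K"
  unfolding proper_colouring_def is_clique_def inj_on_def by blast

lemma proper_colouring_clique_image:
  assumes "proper_colouring V E k c" and "is_clique V E K" and "finite K" and "card K = k"
  shows "c ` K = {..<k}"
proof (rule card_subset_eq)
  show "c ` K \<subseteq> {..<k}" using assms(1,2) unfolding proper_colouring_def is_clique_def by blast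
  show "card (c ` K) = card {..<k}"
    using card_image[OF proper_colouring_inj_on_clique[OF assms(1,2)]] assms(4) by simp
qed simp

lemma clique_subset_side:
  assumes "is_clique V E K" and "K \<subseteq> A \<union> B" and "\<And>x y. x \<in> A \<Longrightarrow> y \<in> B \<Longrightarrow> {x, y} \<notin> E"
  shows "K \<subseteq> A \<or> K \<subseteq> B"
proof (rule ccontr)
  assume "\<not> (K \<subseteq> A \<or> K \<subseteq> B)"
  then obtain x y where "x \<in> K" "x \<notin> A" "y \<in> K" "y \<notin> B" by blast
  with assms show False unfolding is_clique_def by (metis Un_iff subsetD)
qed

lemma clique_number_le:
  assumes "finite V" and "\<And>K. is_clique V E K \<Longrightarrow> card K \<le> k"
  shows "clique_number V E \<le> k"
proof -
  have "{card K | K. is_clique V E K} \<subseteq> card ` Pow V" unfolding is_clique_def by auto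
  then have "finite {card K | K. is_clique V E K}" using assms(1) by (simp add: finite_subset)
  moreover have "{card K | K. is_clique V E K} \<noteq> {}" unfolding is_clique_def by auto
  ultimately show ?thesis unfolding clique_number_def using assms(2) by (auto simp: Max_le_iff)
qed

lemma Delta_eps_eq:
  assumes "simple_graph V E" and "0 \<le> \<epsilon>" and "\<epsilon> \<le> 1" and "\<epsilon> * real m < 1"
    and "{x, y} \<in> E" and "degree E x = d" and "degree E y = d"
    and min_le: "\<And>u v. {u, v} \<in> E \<Longrightarrow> min (degree E u) (degree E v) \<le> d"
    and max_le: "\<And>u v. {u, v} \<in> E \<Longrightarrow> max (degree E u) (degree E v) \<le> d + m"
  shows "Delta_eps \<epsilon> V E = int d"
proof -
  define w where "w e = (1 - \<epsilon>) * real (Min (degree E ` e)) + \<epsilon> * real (Max (degree E ` e))"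
    for e
  have w_pair: "w {u, v} = (1 - \<epsilon>) * min (degree E u) (degree E v) + \<epsilon> * max (degree E u) (degree E v)"
    for u v by (simp add: w_def)
  have "finite E" using assms(1) by (rule simple_graph_finite_edges)
  have "w e < d + 1" if "e \<in> E" for e
  proof -
    obtain u v where e: "e = {u, v}" using assms(1) \<open>e \<in> E\<close> unfolding simple_graph_def by blast
    have "(1 - \<epsilon>) * min (degree E u) (degree E v) \<le> (1 - \<epsilon>) * d"
      using min_le[of u v] that e assms(3) by (intro mult_left_mono) auto
    moreover have "\<epsilon> * max (degree E u) (degree E v) \<le> \<epsilon> * (d + m)"
      using max_le[of u v] that e assms(2) by (intro mult_left_mono) auto
    ultimately show ?thesis using assms(4) unfolding e w_pair by (simp add: algebra_simps)
  qed
  then have "Max (w ` E) < d + 1" using \<open>finite E\<close> assms(5) by (subst Max_less_iff) auto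
  moreover have "d \<le> Max (w ` E)"
  proof -
    have "w {x, y} = d" using assms(6,7) by (simp add: w_pair algebra_simps)
    then show ?thesis using \<open>finite E\<close> assms(5) by (metis Max_ge finite_imageI imageI)
  qed
  moreover have "Delta_eps \<epsilon> V E = \<lfloor>Max (w ` E)\<rfloor>"
    using assms(5) unfolding Delta_eps_def w_def by auto
  ultimately show ?thesis by (simp add: floor_eq_iff)
qed

lemma mult_half_pred_less_one:
  fixes \<epsilon> :: real
  assumes "\<epsilon> * (real k - 1) < 2" and "0 \<le> \<epsilon>"
  shows "\<epsilon> * real ((k - 1) div 2) < 1"
proof (cases k)
  case (Suc n)
  have "2 * (n div 2) \<le> n" by simp
  then have "2 * real (n div 2) \<le> real n" by (metis of_nat_le_iff of_nat_mult of_nat_numeral)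
  then have "\<epsilon> * (2 * real (n div 2)) \<le> \<epsilon> * real n" using assms(2) by (rule mult_left_mono)
  then show ?thesis using assms(1) Suc by (simp add: algebra_simps)
qed simp

definition hub_adj :: "nat \<Rightarrow> nat \<Rightarrow> nat \<Rightarrow> bool" where
  "hub_adj k h y \<longleftrightarrow> (h = k \<and> y < k div 2) \<or> (h = k + 1 \<and> k div 2 \<le> y \<and> y < k)
     \<or> ((h = k \<or> h = k + 1) \<and> k + 2 \<le> y \<and> y \<le> 2 * k)"

definition hub_graph_adj :: "nat \<Rightarrow> nat \<Rightarrow> nat \<Rightarrow> bool" where
  "hub_graph_adj k x y \<longleftrightarrow> x \<noteq> y \<and>
     ((x < k \<and> y < k) \<or> (k + 2 \<le> x \<and> x \<le> 2 * k \<and> k + 2 \<le> y \<and> y \<le> 2 * k)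
      \<or> hub_adj k x y \<or> hub_adj k y x)"

abbreviation hub_graph :: "nat \<Rightarrow> nat set set" where
  "hub_graph k \<equiv> edges_of (hub_graph_adj k)"

lemma symp_hub_graph_adj: "symp (hub_graph_adj k)"
  unfolding symp_def hub_graph_adj_def by auto

lemmas hub_graph_edge_iff = doubleton_in_edges_of[OF symp_hub_graph_adj]
lemmas degree_hub_graph = degree_edges_of[OF symp_hub_graph_adj]

context
  fixes k :: nat
  assumes k2: "2 \<le> k"
begin

lemma simple_hub_graph: "simple_graph {..2 * k} (hub_graph k)"
  by (rule simple_graph_edges_of) (auto simp: hub_graph_adj_def hub_adj_def)

lemma degree_hub_graph_low: "v < k \<Longrightarrow> degree (hub_graph k) v = k"
proof -
  assume "v < k"
  then have "{u. hub_graph_adj k u v} = ({..<k} - {v}) \<union> {if v < k div 2 then k else k + 1}"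
    using k2 unfolding hub_graph_adj_def hub_adj_def by auto
  moreover have "card (({..<k} - {v}) \<union> {if v < k div 2 then k else k + 1}) = k"
    using \<open>v < k\<close> by (subst card_Un_disjoint) auto
  ultimately show ?thesis by (simp add: degree_hub_graph)
qed

lemma degree_hub_graph_high: "k + 2 \<le> v \<Longrightarrow> v \<le> 2 * k \<Longrightarrow> degree (hub_graph k) v \<le> k"
proof -
  assume v: "k + 2 \<le> v" "v \<le> 2 * k"
  then have "{u. hub_graph_adj k u v} \<subseteq> ({k + 2..2 * k} - {v}) \<union> {k, k + 1}"
    unfolding hub_graph_adj_def hub_adj_def by auto
  then have "card {u. hub_graph_adj k u v} \<le> card (({k + 2..2 * k} - {v}) \<union> {k, k + 1})"
    by (intro card_mono) auto
  also have "\<dots> \<le> card ({k + 2..2 * k} - {v}) + card {k, k + 1}" by (rule card_Un_le)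
  also have "\<dots> = k" using v by simp
  finally show ?thesis by (simp add: degree_hub_graph)
qed

lemma degree_hub_graph_nonhub:
  "v \<le> 2 * k \<Longrightarrow> v \<noteq> k \<Longrightarrow> v \<noteq> k + 1 \<Longrightarrow> degree (hub_graph k) v \<le> k"
  by (cases "v < k") (auto simp: degree_hub_graph_low intro: degree_hub_graph_high)

lemma degree_hub_graph_hub:
  assumes "h = k \<or> h = k + 1"
  shows "degree (hub_graph k) h \<le> k + (k - 1) div 2"
proof -
  define half where "half = (if h = k then {..<k div 2} else {k div 2..<k})"
  have "{u. hub_graph_adj k u h} \<subseteq> half \<union> {k + 2..2 * k}"
    using assms k2 unfolding half_def hub_graph_adj_def hub_adj_def by auto
  then have "card {u. hub_graph_adj k u h} \<le> card (half \<union> {k + 2..2 * k})"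
    by (intro card_mono) (auto simp: half_def)
  also have "\<dots> \<le> card half + card {k + 2..2 * k}" by (rule card_Un_le)
  also have "\<dots> \<le> k + (k - 1) div 2" unfolding half_def using k2 by auto
  finally show ?thesis by (simp add: degree_hub_graph)
qed

lemma degree_hub_graph_le:
  assumes "v \<le> 2 * k"
  shows "degree (hub_graph k) v \<le> k + (k - 1) div 2"
proof (cases "v = k \<or> v = k + 1")
  case True
  then show ?thesis by (rule degree_hub_graph_hub)
next
  case False
  then have "degree (hub_graph k) v \<le> k" using assms degree_hub_graph_nonhub by blast
  then show ?thesis by linarith
qed

lemma hub_graph_adj_bounded: "hub_graph_adj k u v \<Longrightarrow> u \<le> 2 * k \<and> v \<le> 2 * k \<and> u \<noteq> v"
  unfolding hub_graph_adj_def hub_adj_def by auto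

lemma Delta_eps_hub_graph:
  assumes "0 \<le> \<epsilon>" and "\<epsilon> \<le> 1" and "\<epsilon> * real ((k - 1) div 2) < 1"
  shows "Delta_eps \<epsilon> {..2 * k} (hub_graph k) = int k"
proof (rule Delta_eps_eq[OF simple_hub_graph assms])
  show "{0, 1} \<in> hub_graph k" using k2 by (simp add: hub_graph_edge_iff hub_graph_adj_def)
  show "degree (hub_graph k) 0 = k" "degree (hub_graph k) 1 = k"
    using k2 by (simp_all add: degree_hub_graph_low)
next
  fix u v assume "{u, v} \<in> hub_graph k"
  then have adj: "hub_graph_adj k u v" by (simp add: hub_graph_edge_iff)
  then have uv: "u \<le> 2 * k" "v \<le> 2 * k" using hub_graph_adj_bounded by auto
  have "(u \<noteq> k \<and> u \<noteq> k + 1) \<or> (v \<noteq> k \<and> v \<noteq> k + 1)"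
    using adj unfolding hub_graph_adj_def hub_adj_def by auto
  then show "min (degree (hub_graph k) u) (degree (hub_graph k) v) \<le> k"
    using uv degree_hub_graph_nonhub by (meson min.coboundedI1 min.coboundedI2)
  show "max (degree (hub_graph k) u) (degree (hub_graph k) v) \<le> k + (k - 1) div 2"
    using uv degree_hub_graph_le by simp
qed

lemma clique_number_hub_graph: "clique_number {..2 * k} (hub_graph k) \<le> k"
proof (rule clique_number_le)
  fix K assume K: "is_clique {..2 * k} (hub_graph k) K"
  define high where "high = {k + 2..2 * k}"
  have apart: "x < k \<Longrightarrow> y \<in> high \<Longrightarrow> {x, y} \<notin> hub_graph k" for x y
    unfolding high_def hub_graph_edge_iff hub_graph_adj_def hub_adj_def by auto
  have "card high = k - 1" unfolding high_def by simp
  consider "K \<subseteq> {..<k} \<union> high" | h where "h \<in> K" "h = k \<or> h = k + 1"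
    using K unfolding is_clique_def high_def by fastforce
  then show "card K \<le> k"
  proof cases
    case 1
    then have "K \<subseteq> {..<k} \<or> K \<subseteq> high"
      using apart by (intro clique_subset_side[OF K]) auto
    then show ?thesis using \<open>card high = k - 1\<close>
      by (metis card_lessThan card_mono diff_le_self finite_atLeastAtMost finite_lessThan high_def
          le_trans)
  next
    case 2
    txt \<open>A hub misses vertex k - 1 (hub k) or vertex 0 (hub k + 1) of the first clique.\<close>
    define half where "half = {..<k} - {if h = k then k - 1 else 0}"
    have "K - {h} \<subseteq> half \<union> high"
      using K 2 k2 unfolding is_clique_def half_def high_def hub_graph_edge_iff
        hub_graph_adj_def hub_adj_def by (auto 0 3)
    moreover have "is_clique {..2 * k} (hub_graph k) (K - {h})" using K unfolding is_clique_def by auto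
    ultimately have "K - {h} \<subseteq> half \<or> K - {h} \<subseteq> high"
      using apart by (intro clique_subset_side) (auto simp: half_def)
    moreover have "card half = k - 1" using k2 unfolding half_def by simp
    ultimately have "card (K - {h}) \<le> k - 1" using \<open>card high = k - 1\<close>
      by (metis card_mono finite_Diff finite_atLeastAtMost finite_lessThan half_def high_def)
    moreover have "card K = Suc (card (K - {h}))"
      using K 2(1) unfolding is_clique_def by (meson card.remove finite_atMost finite_subset)
    ultimately show ?thesis using k2 by linarith
  qed
qed simp

lemma clique_low_hub_graph: "is_clique {..2 * k} (hub_graph k) {..<k}"
  unfolding is_clique_def hub_graph_edge_iff hub_graph_adj_def by auto

lemma clique_hub_high_hub_graph:
  "h = k \<or> h = k + 1 \<Longrightarrow> is_clique {..2 * k} (hub_graph k) (insert h {k + 2..2 * k})"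
  using k2 unfolding is_clique_def hub_graph_edge_iff hub_graph_adj_def hub_adj_def by auto

lemma hub_graph_not_colourable: "\<not> proper_colouring {..2 * k} (hub_graph k) k c"
proof
  assume c: "proper_colouring {..2 * k} (hub_graph k) k c"
  define high where "high = {k + 2..2 * k}"
  have hub_high_colours: "c ` insert h high = {..<k}" if "h = k \<or> h = k + 1" for h
  proof (rule proper_colouring_clique_image[OF c])
    show "is_clique {..2 * k} (hub_graph k) (insert h high)"
      unfolding high_def using that by (rule clique_hub_high_hub_graph)
    show "card (insert h high) = k" using that k2 unfolding high_def by (auto simp: card_insert_if)
  qed (simp add: high_def)
  have colours_k: "c ` insert k high = {..<k}" by (rule hub_high_colours) simp
  have colours_k1: "c ` insert (k + 1) high = {..<k}" by (rule hub_high_colours) simp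
  have "c (k + 1) \<notin> c ` high"
    using proper_colouring_inj_on_clique[OF c clique_hub_high_hub_graph[of "k + 1"]]
    by (simp add: high_def)
  moreover have "c (k + 1) \<in> c ` insert k high"
    unfolding colours_k colours_k1[symmetric] by blast
  ultimately have same_colour: "c (k + 1) = c k" by simp
  have "c ` {..<k} = {..<k}"
    by (rule proper_colouring_clique_image[OF c clique_low_hub_graph]) simp_all
  then have "c k \<in> c ` {..<k}" using colours_k by blast
  then obtain i where i: "i < k" "c i = c k" by auto
  define h where "h = (if i < k div 2 then k else k + 1)"
  have "{i, h} \<in> hub_graph k"
    using i(1) k2 unfolding h_def hub_graph_edge_iff hub_graph_adj_def hub_adj_def by auto
  then have "c i \<noteq> c h" using c unfolding proper_colouring_def by blast
  moreover have "c h = c k" using same_colour by (simp add: h_def)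
  ultimately show False using i(2) by simp
qed

lemma chromatic_number_hub_graph: "k < chromatic_number {..2 * k} (hub_graph k)"
proof (rule less_chromatic_numberI)
  show "proper_colouring {..2 * k} (hub_graph k) (2 * k + 1) id"
    unfolding proper_colouring_def hub_graph_edge_iff using hub_graph_adj_bounded by auto
qed (rule hub_graph_not_colourable)

end

theorem mainTheorem6:
  fixes \<epsilon> :: real and t :: int
  assumes "0 < \<epsilon>" and "\<epsilon> \<le> 1"
    and "\<forall>(V :: nat set) E. simple_graph V E \<and> Delta_eps \<epsilon> V E \<ge> t \<longrightarrow>
           int (chromatic_number V E) \<le> max (int (clique_number V E)) (Delta_eps \<epsilon> V E)"
  shows "real_of_int t \<ge> 1 + 2 / \<epsilon>"
proof (rule ccontr)
  assume "\<not> ?thesis"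
  then have t_small: "\<epsilon> * (real_of_int t - 1) < 2" using assms(1) by (simp add: field_simps)
  define k where "k = nat (max t 2)"
  have k2: "2 \<le> k" and "t \<le> int k" unfolding k_def by linarith+
  have "\<epsilon> * (real k - 1) < 2"
    using t_small assms(2) unfolding k_def by (cases "t \<le> 2") auto
  then have "\<epsilon> * real ((k - 1) div 2) < 1"
    using assms(1) by (intro mult_half_pred_less_one) simp_all
  then have "Delta_eps \<epsilon> {..2 * k} (hub_graph k) = int k"
    using Delta_eps_hub_graph[OF k2] assms(1,2) by simp
  then have "int (chromatic_number {..2 * k} (hub_graph k))
      \<le> max (int (clique_number {..2 * k} (hub_graph k))) (int k)"
    using assms(3)[rule_format, OF conjI[OF simple_hub_graph[OF k2]]] \<open>t \<le> int k\<close> by simp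
  then show False
    using chromatic_number_hub_graph[OF k2] clique_number_hub_graph[OF k2] by linarith
qed

end
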